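(* Let $V_\theta$ be a real vector space of dimension $2$, and let $M\subset V_\theta\times[0,1]$ be a dichotomous item response hypersurface (IRHS), with associated function $f:V_\theta\to[0,1]$ (so $M=\{(\theta,f(\theta)):\theta\in V_\theta\}$). Then the MIRT model given by $M$ is a trivial extension of a unidimensional IRT model: there exist nonzero vectors $u,v\in V_\theta$, linearly independent, such that $$f(\mu u+\lambda v)=f(\mu u)\quad\text{for all }\mu,\lambda\in\mathbb{R},$$ so that $f$ is determined by the monotonic function $\mu\mapsto f(\mu u)$, $\mathbb{R}\to[0,1]$.
   Context: A dichotomous item response hypersurface (IRHS) is a $D=\dim V_\theta$ dimensional smooth submanifold $M$ of $V_\theta\times[0,1]$ such that for any two vectors $v,w\in V_\theta$, the intersection of $(w+\mathbb{R}\cdot v)\times[0,1]$ with $M$ is the graph of a monotonic function $w+\mathbb{R}\cdot v\to[0,1]$, where $w+\mathbb{R}\cdot v=\{w+\lambda v:\lambda\in\mathbb{R}\}$. A function $g:w+\mathbb{R}\cdot v\to[0,1]$ is called monotonic if either $g(w+\lambda v)\le g(w+\mu v)$ for all $\lambda\le\mu$, or $g(w+\lambda v)\ge g(w+\mu v)$ for all $\lambda\le\mu$. (Taking $v=0$ shows that $M$ is the graph of a function $f:V_\theta\to[0,1]$.) A MIRT model is given by an IRHS; a unidimensional IRT model is a monotonic function $\mathbb{R}\to[0,1]$. *)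

theory Defs
  imports "HOL-Analysis.Analysis"
begin

fun Ck_on :: "nat \<Rightarrow> 'a::euclidean_space set \<Rightarrow> ('a \<Rightarrow> 'b::euclidean_space) \<Rightarrow> bool" where
  "Ck_on 0 S f = continuous_on S f"
| "Ck_on (Suc k) S f =
     (\<exists>f'. (\<forall>x\<in>S. (f has_derivative f' x) (at x)) \<and> (\<forall>v. Ck_on k S (\<lambda>x. f' x v)))"

definition smooth_on :: "'a::euclidean_space set \<Rightarrow> ('a \<Rightarrow> 'b::euclidean_space) \<Rightarrow> bool" where
  "smooth_on S f \<longleftrightarrow> (\<forall>k. Ck_on k S f)"

definition smooth_submanifold :: "nat \<Rightarrow> 'a::euclidean_space set \<Rightarrow> bool" where
  "smooth_submanifold D M \<longleftrightarrow>
     (\<forall>p\<in>M. \<exists>U (\<phi>::'a\<Rightarrow>'a) (\<psi>::'a\<Rightarrow>'a) (L::'a set). open U \<and> p \<in> U \<and> open (\<phi> ` U) \<and>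
        smooth_on U \<phi> \<and> smooth_on (\<phi> ` U) \<psi> \<and> (\<forall>x\<in>U. \<psi> (\<phi> x) = x) \<and>
        subspace L \<and> dim L = D \<and> \<phi> ` (M \<inter> U) = \<phi> ` U \<inter> L)"

definition line_through :: "'v::real_vector \<Rightarrow> 'v \<Rightarrow> 'v set" where
  "line_through w v = {w + t *\<^sub>R v | t. True}"

definition monotonic_on_line :: "'v::real_vector \<Rightarrow> 'v \<Rightarrow> ('v \<Rightarrow> real) \<Rightarrow> bool" where
  "monotonic_on_line w v g \<longleftrightarrow>
     (\<forall>t s. t \<le> s \<longrightarrow> g (w + t *\<^sub>R v) \<le> g (w + s *\<^sub>R v)) \<or>
     (\<forall>t s. t \<le> s \<longrightarrow> g (w + t *\<^sub>R v) \<ge> g (w + s *\<^sub>R v))"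

definition IRHS :: "('v::euclidean_space \<times> real) set \<Rightarrow> bool" where
  "IRHS M \<longleftrightarrow> smooth_submanifold DIM('v) M \<and> M \<subseteq> UNIV \<times> {0..1} \<and>
     (\<forall>v w. \<exists>g. monotonic_on_line w v g \<and>
        M \<inter> (line_through w v \<times> {0..1}) = (\<lambda>x. (x, g x)) ` line_through w v)"

definition monotonic :: "(real \<Rightarrow> real) \<Rightarrow> bool" where
  "monotonic h \<longleftrightarrow> mono h \<or> antimono h"

end

theory Submission
  imports Defs
begin

text \<open>By invariance of domain, a chart of the graph inverts the projection onto \<open>V\<^sub>\<theta>\<close>
  continuously, so \<open>f\<close> is continuous. Monotonicity on every line makes the strict sublevel and
  superlevel sets of \<open>f\<close> convex; they are open and disjoint, so every value \<open>d\<close> strictly between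
  two values of \<open>f\<close> is attained on a whole hyperplane with \<open>f \<le> d\<close> on one side and \<open>f \<ge> d\<close> on
  the other. Hyperplanes for different values cannot meet, hence they are all parallel, and \<open>f\<close>
  is constant along any direction orthogonal to their common normal.\<close>

lemma smooth_on_imp_continuous_on: "smooth_on S f \<Longrightarrow> continuous_on S f"
  by (metis Ck_on.simps(1) smooth_on_def)

lemma open_image_inj_on_subspace:
  fixes g :: "'a::euclidean_space \<Rightarrow> 'b::euclidean_space"
  assumes "subspace L" "DIM('b) \<le> dim L" "openin (top_of_set L) S"
    and "continuous_on S g" "inj_on g S"
  shows "open (g ` S)"
  using invariance_of_domain_subspaces [OF assms(3,1) subspace_UNIV] assms by auto

lemma continuous_on_inverse_subspace:
  fixes g :: "'a::euclidean_space \<Rightarrow> 'b::euclidean_space"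
  assumes L: "subspace L" "DIM('b) \<le> dim L" and S: "openin (top_of_set L) S"
    and contg: "continuous_on S g" and hg: "\<And>x. x \<in> S \<Longrightarrow> h (g x) = x"
  shows "continuous_on (g ` S) h"
proof (rule continuous_on_inverse_open_map [OF contg refl hg])
  fix W assume W: "openin (top_of_set S) W"
  have "open (g ` W)"
  proof (rule open_image_inj_on_subspace [OF L])
    show "openin (top_of_set L) W" using W S openin_trans by blast
    show "continuous_on W g" using contg W continuous_on_subset openin_imp_subset by blast
    show "inj_on g W" using hg W openin_imp_subset by (metis inj_on_def subsetD)
  qed
  then show "openin (top_of_set (g ` S)) (g ` W)"
    using W openin_imp_subset by (metis image_mono inf.absorb_iff2 openin_open)
qed

lemma continuous_on_graph_submanifold:
  fixes f :: "'a::euclidean_space \<Rightarrow> 'b::euclidean_space"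
  assumes M: "smooth_submanifold DIM('a) (range (\<lambda>x. (x, f x)))"
  shows "continuous_on UNIV f"
proof -
  have "isCont f p" for p
  proof -
    have p: "(p, f p) \<in> range (\<lambda>x. (x, f x))"
      by simp
    obtain U and \<phi> \<psi> :: "'a \<times> 'b \<Rightarrow> 'a \<times> 'b" and L
      where U: "open U" "(p, f p) \<in> U" and "open (\<phi> ` U)"
        and "smooth_on U \<phi>" and "smooth_on (\<phi> ` U) \<psi>"
        and \<psi>\<phi>: "\<forall>x\<in>U. \<psi> (\<phi> x) = x" and L: "subspace L" "dim L = DIM('a)"
        and chart: "\<phi> ` (range (\<lambda>x. (x, f x)) \<inter> U) = \<phi> ` U \<inter> L"
      using M [unfolded smooth_submanifold_def, rule_format, OF p] by blast
    have cont\<psi>: "continuous_on (\<phi> ` U) \<psi>"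
      using \<open>smooth_on (\<phi> ` U) \<psi>\<close> by (rule smooth_on_imp_continuous_on)
    define T where "T = {x. (x, f x) \<in> U}"
    define h where "h x = \<phi> (x, f x)" for x
    have S: "\<phi> ` U \<inter> L = h ` T"
      unfolding chart [symmetric] T_def h_def by auto
    have fst_\<psi>_h: "fst (\<psi> (h x)) = x" if "x \<in> T" for x
      using that \<psi>\<phi> by (simp add: T_def h_def)
    then have T: "(fst \<circ> \<psi>) ` h ` T = T"
      by (simp add: image_image cong: image_cong)
    have "h ` T \<subseteq> \<phi> ` U"
      using S by blast
    then have cont\<psi>T: "continuous_on (h ` T) \<psi>"
      using cont\<psi> continuous_on_subset by blast
    have "openin (top_of_set L) (h ` T)"
      using \<open>open (\<phi> ` U)\<close> S by (metis Int_commute openin_open_Int)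
    moreover have "continuous_on (h ` T) (fst \<circ> \<psi>)"
      using continuous_on_fst [OF cont\<psi>T] by (simp add: o_def)
    moreover have "h ((fst \<circ> \<psi>) y) = y" if "y \<in> h ` T" for y
      using that fst_\<psi>_h by auto
    ultimately have "open T" and cont_h: "continuous_on T h"
      using open_image_inj_on_subspace [OF L(1)] continuous_on_inverse_subspace [OF L(1)] L(2) T
      by (metis inj_on_inverseI order_refl)+
    have "continuous_on (h ` T) (snd \<circ> \<psi>)"
      using continuous_on_snd [OF cont\<psi>T] by (simp add: o_def)
    then have "continuous_on T (snd \<circ> \<psi> \<circ> h)"
      by (rule continuous_on_compose [OF cont_h])
    moreover have "(snd \<circ> \<psi> \<circ> h) x = f x" if "x \<in> T" for x
      using that \<psi>\<phi> by (simp add: T_def h_def)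
    ultimately have "continuous_on T f"
      by (rule continuous_on_eq)
    then show ?thesis
      using \<open>open T\<close> U(2) by (simp add: T_def continuous_on_eq_continuous_at)
  qed
  then show ?thesis by (simp add: continuous_at_imp_continuous_on)
qed

lemma monotonic_on_line_between:
  assumes "monotonic_on_line x (y - x) f" "0 \<le> u" "u \<le> 1"
  shows "min (f x) (f y) \<le> f (x + u *\<^sub>R (y - x)) \<and> f (x + u *\<^sub>R (y - x)) \<le> max (f x) (f y)"
  using assms(1) unfolding monotonic_on_line_def
proof
  assume inc: "\<forall>t s. t \<le> s \<longrightarrow> f (x + t *\<^sub>R (y - x)) \<le> f (x + s *\<^sub>R (y - x))"
  have "f x \<le> f (x + u *\<^sub>R (y - x))" "f (x + u *\<^sub>R (y - x)) \<le> f y"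
    using inc [rule_format, of 0 u] inc [rule_format, of u 1] assms(2,3) by simp_all
  then show ?thesis by linarith
next
  assume dec: "\<forall>t s. t \<le> s \<longrightarrow> f (x + s *\<^sub>R (y - x)) \<le> f (x + t *\<^sub>R (y - x))"
  have "f (x + u *\<^sub>R (y - x)) \<le> f x" "f y \<le> f (x + u *\<^sub>R (y - x))"
    using dec [rule_format, of 0 u] dec [rule_format, of u 1] assms(2,3) by simp_all
  then show ?thesis by linarith
qed

lemma convex_strict_sublevel_monotonic_on_lines:
  fixes f :: "'a::real_vector \<Rightarrow> real"
  assumes "\<And>w v. monotonic_on_line w v f"
  shows "convex {x. f x < d}"
  unfolding convex_alt
proof (intro ballI allI impI)
  fix x y :: 'a and u :: real
  assume "x \<in> {x. f x < d}" "y \<in> {x. f x < d}" "0 \<le> u \<and> u \<le> 1"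
  moreover have "(1 - u) *\<^sub>R x + u *\<^sub>R y = x + u *\<^sub>R (y - x)"
    by (simp add: algebra_simps)
  ultimately show "(1 - u) *\<^sub>R x + u *\<^sub>R y \<in> {x. f x < d}"
    using monotonic_on_line_between [of x y f u] assms by auto
qed

lemma monotonic_on_line_uminus: "monotonic_on_line w v (\<lambda>x. - f x) \<longleftrightarrow> monotonic_on_line w v f"
  by (auto simp: monotonic_on_line_def)

lemma convex_strict_superlevel_monotonic_on_lines:
  assumes "\<And>w v. monotonic_on_line w v f"
  shows "convex {x. d < f x}"
  using convex_strict_sublevel_monotonic_on_lines [of "\<lambda>x. - f x" "- d"] assms
  by (simp add: monotonic_on_line_uminus)

definition separates_level :: "('a::real_inner \<Rightarrow> real) \<Rightarrow> real \<Rightarrow> 'a \<Rightarrow> real \<Rightarrow> bool" where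
  "separates_level f d n k \<longleftrightarrow>
     n \<noteq> 0 \<and> (\<forall>x. n \<bullet> x \<le> k \<longrightarrow> f x \<le> d) \<and> (\<forall>x. k \<le> n \<bullet> x \<longrightarrow> d \<le> f x)"

lemma exists_separates_level:
  fixes f :: "'a::euclidean_space \<Rightarrow> real"
  assumes cont: "continuous_on UNIV f" and mono: "\<And>w v. monotonic_on_line w v f"
    and "f a < d" "d < f b"
  shows "\<exists>n k. separates_level f d n k"
proof -
  have "{x. f x < d} \<noteq> {}" "{x. d < f x} \<noteq> {}" "{x. f x < d} \<inter> {x. d < f x} = {}"
    using \<open>f a < d\<close> \<open>d < f b\<close> by auto
  then obtain n k where "n \<noteq> 0" and lt: "\<forall>x\<in>{x. f x < d}. n \<bullet> x \<le> k"
    and gt: "\<forall>x\<in>{x. d < f x}. k \<le> n \<bullet> x"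
    using separating_hyperplane_sets [OF convex_strict_sublevel_monotonic_on_lines [OF mono]
        convex_strict_superlevel_monotonic_on_lines [OF mono]] by blast
  have "open {x. f x < d}" "open {x. d < f x}"
    using cont by (auto intro!: open_Collect_less continuous_intros)
  then have "{x. f x < d} \<subseteq> interior {x. n \<bullet> x \<le> k}" "{x. d < f x} \<subseteq> interior {x. k \<le> n \<bullet> x}"
    using lt gt by (intro interior_maximal; auto)+
  then have "f x < d \<Longrightarrow> n \<bullet> x < k" "d < f x \<Longrightarrow> k < n \<bullet> x" for x
    using interior_halfspace_le [OF \<open>n \<noteq> 0\<close>] interior_halfspace_ge [OF \<open>n \<noteq> 0\<close>] by blast+
  then have "separates_level f d n k"
    unfolding separates_level_def using \<open>n \<noteq> 0\<close> by (meson not_le)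
  then show ?thesis by blast
qed

lemma separates_level_le: "separates_level f d n k \<Longrightarrow> n \<bullet> x \<le> k \<Longrightarrow> f x \<le> d"
  by (simp add: separates_level_def)

lemma separates_level_ge: "separates_level f d n k \<Longrightarrow> k \<le> n \<bullet> x \<Longrightarrow> d \<le> f x"
  by (simp add: separates_level_def)

lemma separates_level_hyperplane: "separates_level f d n k \<Longrightarrow> n \<bullet> x = k \<Longrightarrow> f x = d"
  using separates_level_le separates_level_ge by (metis order_antisym order_refl)

lemma separates_level_orthogonal:
  fixes n0 :: "'a::real_inner"
  assumes sep0: "separates_level f c n0 k0" and sep: "separates_level f d n k"
    and "c \<noteq> d" and "n0 \<bullet> v = 0"
  shows "n \<bullet> v = 0"
proof (rule ccontr)
  assume "n \<bullet> v \<noteq> 0"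
  define y where "y = (k0 / (n0 \<bullet> n0)) *\<^sub>R n0"
  define z where "z = y + ((k - n \<bullet> y) / (n \<bullet> v)) *\<^sub>R v"
  have "n0 \<noteq> 0" using sep0 by (simp add: separates_level_def)
  then have "n0 \<bullet> z = k0"
    using \<open>n0 \<bullet> v = 0\<close> by (simp add: z_def y_def inner_add_right)
  then have "f z = c"
    by (rule separates_level_hyperplane [OF sep0])
  moreover have "n \<bullet> z = k"
    using \<open>n \<bullet> v \<noteq> 0\<close> by (simp add: z_def inner_add_right)
  then have "f z = d"
    by (rule separates_level_hyperplane [OF sep])
  ultimately show False
    using \<open>c \<noteq> d\<close> by simp
qed

lemma constant_along_separates_level:
  fixes f :: "'a::euclidean_space \<Rightarrow> real"
  assumes cont: "continuous_on UNIV f" and mono: "\<And>w v. monotonic_on_line w v f"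
    and sep0: "separates_level f c n0 k0" and "n0 \<bullet> v = 0"
  shows "f (x + t *\<^sub>R v) = f x"
proof -
  have increase_impossible: False if "f p < f (p + s *\<^sub>R v)" for p s
  proof -
    define d where "d = (f p + f (p + s *\<^sub>R v)) / 2"
    have "f p < d" "d < f (p + s *\<^sub>R v)"
      using that by (simp_all add: d_def)
    obtain n k where sep: "separates_level f d n k" and "n \<bullet> v = 0"
    proof (cases "d = c")
      case True
      then show ?thesis using that sep0 \<open>n0 \<bullet> v = 0\<close> by blast
    next
      case False
      obtain n k where sep: "separates_level f d n k"
        using exists_separates_level [OF cont mono \<open>f p < d\<close> \<open>d < f (p + s *\<^sub>R v)\<close>] by blast
      moreover have "n \<bullet> v = 0"
        using separates_level_orthogonal [OF sep0 sep _ \<open>n0 \<bullet> v = 0\<close>] False by simp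
      ultimately show ?thesis using that by blast
    qed
    have "n \<bullet> (p + s *\<^sub>R v) = n \<bullet> p"
      using \<open>n \<bullet> v = 0\<close> by (simp add: inner_add_right)
    then have "f (p + s *\<^sub>R v) \<le> d \<or> d \<le> f p"
      using separates_level_le [OF sep] separates_level_ge [OF sep] by (metis nle_le)
    then show False
      using \<open>f p < d\<close> \<open>d < f (p + s *\<^sub>R v)\<close> by linarith
  qed
  have "\<not> f x < f (x + t *\<^sub>R v)"
    using increase_impossible by blast
  moreover have "\<not> f (x + t *\<^sub>R v) < f x"
    using increase_impossible [of "x + t *\<^sub>R v" "- t"] by auto
  ultimately show ?thesis
    by linarith
qed

lemma exists_constant_direction:
  fixes f :: "'a::euclidean_space \<Rightarrow> real"
  assumes cont: "continuous_on UNIV f" and mono: "\<And>w v. monotonic_on_line w v f"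
    and "2 \<le> DIM('a)"
  shows "\<exists>u v. u \<noteq> 0 \<and> v \<noteq> 0 \<and> orthogonal u v \<and> (\<forall>x t. f (x + t *\<^sub>R v) = f x)"
proof (cases "\<exists>a b. f a < f b")
  case True
  then obtain a b where "f a < f b" by blast
  moreover have "f a < (f a + f b) / 2" "(f a + f b) / 2 < f b"
    using \<open>f a < f b\<close> by simp_all
  ultimately obtain n k where sep: "separates_level f ((f a + f b) / 2) n k"
    using exists_separates_level [OF cont mono] by blast
  then have "n \<noteq> 0" by (simp add: separates_level_def)
  obtain v where "v \<noteq> 0" "orthogonal n v"
    using orthogonal_to_vector_exists [OF \<open>2 \<le> DIM('a)\<close>] by blast
  then have "f (x + t *\<^sub>R v) = f x" for x t
    using constant_along_separates_level [OF cont mono sep] by (simp add: orthogonal_def)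
  then show ?thesis
    using \<open>n \<noteq> 0\<close> \<open>v \<noteq> 0\<close> \<open>orthogonal n v\<close> by blast
next
  case False
  then have "f (x + t *\<^sub>R v) = f x" for x t v
    by (meson order_antisym not_less)
  obtain u :: 'a where "u \<in> Basis"
    using nonempty_Basis by blast
  then have "u \<noteq> 0" by auto
  moreover obtain v where "v \<noteq> 0" "orthogonal u v"
    using orthogonal_to_vector_exists [OF \<open>2 \<le> DIM('a)\<close>] by blast
  ultimately show ?thesis
    using \<open>\<And>x t v. f (x + t *\<^sub>R v) = f x\<close> by blast
qed

lemma IRHS_graph_monotonic_on_line:
  assumes "IRHS (range (\<lambda>x. (x, f x)))"
  shows "monotonic_on_line w v f"
proof -
  obtain g where g: "monotonic_on_line w v g"
    and eq: "range (\<lambda>x. (x, f x)) \<inter> (line_through w v \<times> {0..1}) = (\<lambda>x. (x, g x)) ` line_through w v"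
    using assms unfolding IRHS_def by blast
  have "f x \<in> {0..1}" for x
    using assms unfolding IRHS_def by blast
  then have "(x, f x) \<in> (\<lambda>x. (x, g x)) ` line_through w v" if "x \<in> line_through w v" for x
    using that unfolding eq [symmetric] by blast
  then have "f x = g x" if "x \<in> line_through w v" for x
    using that by blast
  then show ?thesis
    using g unfolding monotonic_on_line_def line_through_def by auto
qed

theorem theorem1:
  fixes f :: "'v::euclidean_space \<Rightarrow> real"
  assumes "DIM('v) = 2"
    and "IRHS (range (\<lambda>\<theta>. (\<theta>, f \<theta>)))"
  shows "\<exists>u v. u \<noteq> 0 \<and> v \<noteq> 0 \<and> u \<noteq> v \<and> independent {u, v} \<and>
           (\<forall>\<mu> t. f (\<mu> *\<^sub>R u + t *\<^sub>R v) = f (\<mu> *\<^sub>R u)) \<and>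
           monotonic (\<lambda>\<mu>. f (\<mu> *\<^sub>R u)) \<and> (\<forall>\<mu>. f (\<mu> *\<^sub>R u) \<in> {0..1})"
proof -
  have cont: "continuous_on UNIV f"
    using assms(2) continuous_on_graph_submanifold unfolding IRHS_def by blast
  have mono: "monotonic_on_line w v f" for w v
    using assms(2) by (rule IRHS_graph_monotonic_on_line)
  obtain u v where "u \<noteq> 0" "v \<noteq> 0" "orthogonal u v" and const: "\<forall>x t. f (x + t *\<^sub>R v) = f x"
    using exists_constant_direction [OF cont mono] assms(1) by auto
  have "u \<noteq> v"
    using \<open>u \<noteq> 0\<close> \<open>orthogonal u v\<close> by (auto simp: orthogonal_def)
  have "independent {u, v}"
    using \<open>u \<noteq> 0\<close> \<open>v \<noteq> 0\<close> \<open>orthogonal u v\<close>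
    by (intro pairwise_orthogonal_independent) (auto simp: pairwise_def orthogonal_commute)
  have "monotonic (\<lambda>\<mu>. f (\<mu> *\<^sub>R u))"
    using mono [of 0 u] unfolding monotonic_on_line_def monotonic_def mono_def antimono_def by simp
  have "f x \<in> {0..1}" for x
    using assms(2) unfolding IRHS_def by blast
  then show ?thesis
    using \<open>u \<noteq> 0\<close> \<open>v \<noteq> 0\<close> \<open>u \<noteq> v\<close> \<open>independent {u, v}\<close> \<open>monotonic (\<lambda>\<mu>. f (\<mu> *\<^sub>R u))\<close> const
    by (intro exI [of _ u] exI [of _ v]) simp
qed

end
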